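(* Suppose we have $n\ge2$ agents with additive, identical, normalized valuations, and let $a\in[0,1]$. Suppose the accuracy is $\eta<1-\frac{1-a}{(2n-1)(1+a)}$, i.e., the error between the provided prediction $(p(g_t))_{t\in[T']}$ and the true values $(v(g_t))_{t\in[T]}$ is $D=1-\eta>\frac{1-a}{(2n-1)(1+a)}$. Then any algorithm that computes an exact EFX allocation on the predictions and follows it (allocating each arriving good $g_t$ to the agent that receives $g_t$ in that allocation) while ignoring the true values, is not able to compute an $a$-EFX allocation according to the true valuation, even when $T'=T$.
   Context: Online fair division with predictions and identical valuations: goods $g_1,\dots,g_T$ arrive one per time step; all agents share a true additive normalized valuation $v$ ($v(g_t)\ge0$, $\sum_{t\in[T]}v(g_t)=1$, $v(S)=\sum_{g\in S}v(g)$) and a prediction $p=(p(g_1),\dots,p(g_{T'}))$, an additive normalized valuation over $T'$ predicted goods. The error is $D=\frac12\sum_{t=1}^{\max\{T,T'\}}|p(g_t)-v(g_t)|$ (missing entries set to $0$), and the accuracy is $\eta=1-D$. For $S\ne\emptyset$ and valuation $f$, $\bar S^f=S\setminus\{g\}$ with $g\in\arg\max_{g'\in S}f(S\setminus\{g'\})$, $\bar\emptyset^f=\emptyset$. An allocation $(A_1,\dots,A_n)$ is $a$-EFX with respect to $f$ if $f(A_i)\ge a\cdot f(\bar{A_j}^f)$ for all $i,j$; exact EFX means $1$-EFX. *)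

theory Defs
  imports Complex_Main
begin

text \<open>Goods are indexed by natural numbers 0,...,T-1 (g_{t+1} is index t);
  agents by 0,...,n-1. A valuation on T goods is a function nat => real,
  only its values below T matter; f(S) = sum f S.\<close>

definition normalized :: "nat \<Rightarrow> (nat \<Rightarrow> real) \<Rightarrow> bool" where
  "normalized T f \<longleftrightarrow> (\<forall>t<T. 0 \<le> f t) \<and> (\<Sum>t<T. f t) = 1"

definition pred_error :: "nat \<Rightarrow> (nat \<Rightarrow> real) \<Rightarrow> nat \<Rightarrow> (nat \<Rightarrow> real) \<Rightarrow> real" where
  "pred_error T v T' p =
     (1/2) * (\<Sum>t<max T T'. \<bar>(if t < T' then p t else 0) - (if t < T then v t else 0)\<bar>)"

definition bar :: "(nat \<Rightarrow> real) \<Rightarrow> nat set \<Rightarrow> nat set" where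
  "bar f S = (if S = {} then {}
              else S - {SOME g. g \<in> S \<and> (\<forall>g'\<in>S. sum f (S - {g'}) \<le> sum f (S - {g}))})"

definition is_alloc :: "nat \<Rightarrow> nat \<Rightarrow> (nat \<Rightarrow> nat set) \<Rightarrow> bool" where
  "is_alloc n T A \<longleftrightarrow> (\<forall>i<n. A i \<subseteq> {..<T})
      \<and> (\<forall>i<n. \<forall>j<n. i \<noteq> j \<longrightarrow> A i \<inter> A j = {})
      \<and> (\<Union>i<n. A i) = {..<T}"

definition is_aEFX :: "real \<Rightarrow> (nat \<Rightarrow> real) \<Rightarrow> nat \<Rightarrow> (nat \<Rightarrow> nat set) \<Rightarrow> bool" where
  "is_aEFX a f n A \<longleftrightarrow> (\<forall>i<n. \<forall>j<n. sum f (A i) \<ge> a * sum f (bar f (A j)))"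

end

theory Submission
  imports Defs
begin

text \<open>If the error is at most 1 - 1/(2n - 1), predict 2n - 1 goods of equal value. Whatever
  allocation is followed, some agent i gets at most one good g and some agent j at least two,
  one of them x. Moving mass D onto x, taken first from g, gives v(g) < a v(x) precisely when
  D > (1 - a)/((2n - 1)(1 + a)), so i envies j beyond the factor a even after one good of j is
  removed. For larger errors, predict n goods of value 1/n and one worthless good: in an exact
  EFX allocation of the prediction the owner of the worthless good also holds a valuable good h,
  and the true valuation putting 1 - D on h and D on the worthless good leaves every other agent
  with nothing.\<close>

lemma two_le_cardE:
  assumes "2 \<le> card S"
  obtains x y where "x \<in> S" "y \<in> S" "x \<noteq> y"
proof -
  obtain x B where "S = insert x B" "x \<notin> B" "1 \<le> card B"
    using assms card_le_Suc_iff[of 1 S] by auto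
  then obtain y where "y \<in> B" by fastforce
  then show thesis using that \<open>S = insert x B\<close> \<open>x \<notin> B\<close> by blast
qed

lemma ex_ge_2_if_card_less_sum:
  fixes f :: "'a \<Rightarrow> nat"
  assumes "card I < sum f I"
  shows "\<exists>i\<in>I. 2 \<le> f i"
proof -
  have "\<not> (\<forall>i\<in>I. f i \<le> 1)"
  proof
    assume "\<forall>i\<in>I. f i \<le> 1"
    then have "sum f I \<le> of_nat (card I) * 1" by (intro sum_bounded_above) auto
    then show False using assms by simp
  qed
  then obtain i where "i \<in> I" "\<not> f i \<le> 1" by blast
  then show ?thesis by (intro bexI[of _ i]) auto
qed

lemma ex_le_1_if_sum_less:
  fixes f :: "'a \<Rightarrow> nat"
  assumes "sum f I < 2 * card I"
  shows "\<exists>i\<in>I. f i \<le> 1"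
proof -
  have "\<not> (\<forall>i\<in>I. 2 \<le> f i)"
  proof
    assume "\<forall>i\<in>I. 2 \<le> f i"
    then have "of_nat (card I) * 2 \<le> sum f I" by (intro sum_bounded_below) auto
    then show False using assms by simp
  qed
  then obtain i where "i \<in> I" "\<not> 2 \<le> f i" by blast
  then show ?thesis by (intro bexI[of _ i]) auto
qed

lemma sum_if_two_points:
  assumes "finite S" "g \<in> S" "x \<in> S" "g \<noteq> x"
  shows "(\<Sum>t\<in>S. if t = g then b else if t = x then c else d)
         = b + c + (real (card S) - 2) * d"
proof -
  let ?f = "\<lambda>t. if t = g then b else if t = x then c else d"
  have "card {g, x} \<le> card S" using assms by (intro card_mono) auto
  then have card_S: "2 \<le> card S" using assms by simp
  have "sum ?f S = b + sum ?f (S - {g})" using sum.remove[OF assms(1,2), of ?f] by simp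
  also have "sum ?f (S - {g}) = c + sum ?f (S - {g} - {x})"
    using assms by (subst sum.remove[of _ x]) auto
  also have "sum ?f (S - {g} - {x}) = real (card (S - {g} - {x})) * d" by simp
  also have "card (S - {g} - {x}) = card S - 2"
    using assms by (simp add: card_Diff_singleton_if)
  finally show ?thesis using card_S by simp
qed

lemma bar_eq_Diff_maximizer:
  assumes "finite S" "S \<noteq> {}"
  obtains g where "g \<in> S" "bar f S = S - {g}"
    and "\<forall>g'\<in>S. sum f (S - {g'}) \<le> sum f (S - {g})"
proof -
  let ?maximizer = "\<lambda>g. g \<in> S \<and> (\<forall>g'\<in>S. sum f (S - {g'}) \<le> sum f (S - {g}))"
  have "Max ((\<lambda>g. sum f (S - {g})) ` S) \<in> (\<lambda>g. sum f (S - {g})) ` S"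
    using assms by (intro Max_in) auto
  then obtain g where "g \<in> S" "sum f (S - {g}) = Max ((\<lambda>g. sum f (S - {g})) ` S)"
    by auto
  then have "?maximizer g" using assms by simp
  then have "?maximizer (SOME g. ?maximizer g)" by (rule someI)
  moreover have "bar f S = S - {SOME g. ?maximizer g}" using assms by (simp add: bar_def)
  ultimately show thesis using that by blast
qed

lemma le_sum_bar:
  assumes "finite S" "x \<in> S" "y \<in> S" "x \<noteq> y" "\<forall>t\<in>S. 0 \<le> f t"
  shows "f x \<le> sum f (bar f S)"
proof -
  obtain g where "g \<in> S" "bar f S = S - {g}"
    and max: "\<forall>g'\<in>S. sum f (S - {g'}) \<le> sum f (S - {g})"
    using bar_eq_Diff_maximizer[of S f] assms by blast
  have "f x \<le> sum f (S - {y})" using assms by (intro member_le_sum) auto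
  also have "\<dots> \<le> sum f (S - {g})" using max \<open>y \<in> S\<close> by blast
  finally show ?thesis using \<open>bar f S = S - {g}\<close> by simp
qed

lemma not_is_aEFX_if_less_member:
  assumes "i < n" "j < n" "finite (A j)" "x \<in> A j" "y \<in> A j" "x \<noteq> y"
    and "\<forall>t\<in>A j. 0 \<le> v t" "0 \<le> a" "sum v (A i) < a * v x"
  shows "\<not> is_aEFX a v n A"
proof -
  have "a * v x \<le> a * sum v (bar v (A j))"
    using le_sum_bar[of "A j" x y v] assms by (intro mult_left_mono) auto
  then show ?thesis using assms unfolding is_aEFX_def by force
qed

lemma sum_card_Int_alloc:
  assumes "is_alloc n T A" "P \<subseteq> {..<T}"
  shows "(\<Sum>i<n. card (A i \<inter> P)) = card P"
proof -
  have disj: "\<forall>i<n. \<forall>j<n. i \<noteq> j \<longrightarrow> A i \<inter> A j = {}"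
    and cover: "(\<Union>i<n. A i) = {..<T}"
    using assms(1) by (simp_all add: is_alloc_def)
  have fin: "finite (A i \<inter> P)" for i using assms(2) finite_subset by blast
  have "(\<Sum>i<n. card (A i \<inter> P)) = card (\<Union>i<n. A i \<inter> P)"
    using disj fin by (intro card_UN_disjoint[symmetric]) auto
  also have "(\<Union>i<n. A i \<inter> P) = (\<Union>i<n. A i) \<inter> P" by blast
  also have "\<dots> = P" using cover assms(2) by blast
  finally show ?thesis .
qed

lemma normalized_uniform_prefix:
  assumes "0 < k" "k \<le> T"
  shows "normalized T (\<lambda>t. if t < k then 1 / real k else 0)"
proof -
  have "{..<T} \<inter> {t. t < k} = {..<k}" using assms by auto
  then have "(\<Sum>t<T. if t < k then 1 / real k else 0) = (\<Sum>t<k. 1 / real k)"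
    by (simp add: sum.If_cases)
  then show ?thesis using assms unfolding normalized_def by simp
qed

lemma is_aEFX_1_imp_positive_good:
  assumes alloc: "is_alloc n T A" and EFX: "is_aEFX 1 p n A"
    and nonneg: "\<forall>t<T. 0 \<le> p t" and many: "n \<le> card {t. t < T \<and> 0 < p t}"
    and j: "j < n"
  shows "\<exists>h\<in>A j. 0 < p h"
proof (rule ccontr)
  \<comment> \<open>Otherwise the other n - 1 agents share at least n positive goods, so one of them
    holds two, and j, whose bundle is worthless, envies it even after a good is removed.\<close>
  assume none: "\<not> ?thesis"
  define P where "P = {t. t < T \<and> 0 < p t}"
  have sub: "\<And>i. i < n \<Longrightarrow> A i \<subseteq> {..<T}" using alloc by (simp add: is_alloc_def)
  have "A j \<inter> P = {}" using none unfolding P_def by blast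
  have "sum p (A j) = 0"
  proof (intro sum.neutral ballI)
    fix h assume "h \<in> A j"
    then have "0 \<le> p h" "\<not> 0 < p h" using none sub[OF j] nonneg by auto
    then show "p h = 0" by linarith
  qed
  have "(\<Sum>i\<in>{..<n} - {j}. card (A i \<inter> P)) = (\<Sum>i<n. card (A i \<inter> P))"
    using j \<open>A j \<inter> P = {}\<close> sum.remove[of "{..<n}" j "\<lambda>i. card (A i \<inter> P)"] by simp
  also have "\<dots> = card P" using alloc by (rule sum_card_Int_alloc) (auto simp: P_def)
  finally have "card ({..<n} - {j}) < (\<Sum>i\<in>{..<n} - {j}. card (A i \<inter> P))"
    using j many unfolding P_def by simp
  then have "\<exists>k\<in>{..<n} - {j}. 2 \<le> card (A k \<inter> P)" by (rule ex_ge_2_if_card_less_sum)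
  then obtain k where k: "k < n" "2 \<le> card (A k \<inter> P)" by blast
  then obtain t1 t2 where t: "t1 \<in> A k \<inter> P" "t2 \<in> A k \<inter> P" "t1 \<noteq> t2"
    using two_le_cardE[OF k(2)] by blast
  have "0 < p t1" using t unfolding P_def by blast
  also have "p t1 \<le> sum p (bar p (A k))"
    using t sub[OF k(1)] finite_subset[OF sub[OF k(1)]] nonneg by (intro le_sum_bar) auto
  also have "\<dots> \<le> sum p (A j)" using EFX j k unfolding is_aEFX_def by simp
  finally show False using \<open>sum p (A j) = 0\<close> by simp
qed

lemma perturbed_uniform_valuation:
  fixes m :: nat and a D :: real
  assumes m: "3 \<le> m" and gx: "g < m" "x < m" "g \<noteq> x" and a: "0 < a"
    and D: "0 \<le> D" "D \<le> 1 - 1 / m" "(1 - a) / (m * (1 + a)) < D"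
  obtains v where "normalized m v"
    and "pred_error m v m (\<lambda>t. if t < m then 1 / m else 0) = D"
    and "v g < a * v x"
proof -
  \<comment> \<open>The mass D moved onto x is taken from g as far as possible and otherwise
    evenly from the remaining m - 2 goods.\<close>
  define r where "r = min D (1 / m)"
  define s where "s = (D - r) / (real m - 2)"
  define v where "v t = (if t = g then 1 / m - r else if t = x then 1 / m + D else 1 / m - s)"
    for t
  have m_gt_2: "2 < real m" using m by simp
  have r: "0 \<le> r" "r \<le> D" "r \<le> 1 / m" using D(1) unfolding r_def by auto
  have s_eq: "(real m - 2) * s = D - r" using m_gt_2 unfolding s_def by simp
  have "D - r \<le> (real m - 2) * (1 / m)"
  proof (cases "D \<le> 1 / m")
    case True
    then show ?thesis using m_gt_2 by (simp add: r_def)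
  next
    case False
    then have "r = 1 / m" by (simp add: r_def)
    moreover have "(real m - 2) * (1 / real m) = 1 - 1 / m - 1 / m"
      using m_gt_2 by (simp add: field_simps)
    ultimately show ?thesis using D(2) by linarith
  qed
  then have s: "0 \<le> s" "s \<le> 1 / m"
    using r m_gt_2 unfolding s_def by (simp_all add: divide_le_eq mult.commute)
  have nonneg: "0 \<le> v t" for t using r s D(1) unfolding v_def by simp
  have "(\<Sum>t<m. v t) = (1 / m - r) + (1 / m + D) + (real m - 2) * (1 / m - s)"
    unfolding v_def using gx sum_if_two_points[of "{..<m}" g x] by simp
  also have "\<dots> = 1" using s_eq m_gt_2 by (simp add: algebra_simps)
  finally have "normalized m v" using nonneg by (simp add: normalized_def)
  moreover have "pred_error m v m (\<lambda>t. if t < m then 1 / m else 0) = D"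
  proof -
    have "(\<Sum>t<max m m. \<bar>(if t < m then if t < m then 1 / m else 0 else 0)
                           - (if t < m then v t else 0)\<bar>)
        = (\<Sum>t<m. if t = g then r else if t = x then D else s)"
      using r s D(1) by (intro sum.cong) (auto simp: v_def)
    also have "\<dots> = r + D + (real m - 2) * s"
      using gx sum_if_two_points[of "{..<m}" g x] by simp
    finally show ?thesis using s_eq by (simp add: pred_error_def)
  qed
  moreover have "v g < a * v x"
  proof (cases "D \<le> 1 / m")
    case True
    have "(1 - a) / m = (1 - a) / (m * (1 + a)) * (1 + a)" using a m_gt_2 by simp
    also have "\<dots> < D * (1 + a)" using D(3) a by (intro mult_strict_right_mono) auto
    finally have "(1 - a) / m < D * (1 + a)" .
    moreover have "1 / m - D - a * (1 / m + D) = (1 - a) / m - D * (1 + a)"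
      by (simp add: algebra_simps diff_divide_distrib)
    ultimately have "1 / m - D < a * (1 / m + D)" by linarith
    then show ?thesis using True gx by (simp add: v_def r_def)
  next
    case False
    have "0 < 1 / m + D" using D(1) m_gt_2 by (simp add: add_pos_nonneg)
    then have "0 < a * (1 / m + D)" using a by simp
    then show ?thesis using False gx by (simp add: v_def r_def)
  qed
  ultimately show thesis by (rule that)
qed

lemma uniform_prediction_not_aEFX:
  fixes n T :: nat and a D :: real
  assumes T: "n < T" "T < 2 * n" and alloc: "is_alloc n T A" and a: "0 < a"
    and D: "0 \<le> D" "D \<le> 1 - 1 / T" "(1 - a) / (T * (1 + a)) < D"
  shows "\<exists>v. normalized T v \<and> pred_error T v T (\<lambda>t. if t < T then 1 / T else 0) = D
             \<and> \<not> is_aEFX a v n A"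
proof -
  have sub: "A i \<subseteq> {..<T}" if "i < n" for i using alloc that by (simp add: is_alloc_def)
  have disj: "A i \<inter> A j = {}" if "i < n" "j < n" "i \<noteq> j" for i j
    using alloc that by (simp add: is_alloc_def)
  have fin: "finite (A i)" if "i < n" for i using sub[OF that] finite_subset by blast
  have "(\<Sum>i<n. card (A i)) = (\<Sum>i<n. card (A i \<inter> {..<T}))"
    using sub by (intro sum.cong) (auto simp: Int_absorb2)
  also have "\<dots> = T" using sum_card_Int_alloc[OF alloc] by simp
  finally have sum_card: "(\<Sum>i<n. card (A i)) = T" .
  then obtain i where i: "i < n" "card (A i) \<le> 1"
    using ex_le_1_if_sum_less[of "\<lambda>i. card (A i)" "{..<n}"] T by auto
  obtain j where j: "j < n" "2 \<le> card (A j)"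
    using ex_ge_2_if_card_less_sum[of "{..<n}" "\<lambda>i. card (A i)"] sum_card T by auto
  have "i \<noteq> j" using i j by auto
  obtain x y where xy: "x \<in> A j" "y \<in> A j" "x \<noteq> y" using two_le_cardE[OF j(2)] by blast
  obtain g where g: "g < T" "g \<noteq> x" "A i \<subseteq> {g}"
  proof (cases "A i = {}")
    case True
    then show thesis using that[of y] xy sub[OF j(1)] by auto
  next
    case False
    then have "card (A i) = 1" using i(2) fin[OF i(1)] by (simp add: le_antisym Suc_le_eq card_gt_0_iff)
    then obtain g where "A i = {g}" by (rule card_1_singletonE)
    moreover have "g \<notin> A j" using disj[OF i(1) j(1) \<open>i \<noteq> j\<close>] \<open>A i = {g}\<close> by auto
    ultimately show thesis using that[of g] xy sub[OF i(1)] by auto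
  qed
  obtain v where v: "normalized T v" "pred_error T v T (\<lambda>t. if t < T then 1 / T else 0) = D"
    and less: "v g < a * v x"
    using perturbed_uniform_valuation[of T g x a D] g xy sub[OF j(1)] T a D by force
  have nonneg: "0 \<le> v t" if "t < T" for t using v(1) that by (simp add: normalized_def)
  have "sum v (A i) \<le> sum v {g}" using g nonneg by (intro sum_mono2) auto
  then have "sum v (A i) < a * v x" using less by simp
  then have "\<not> is_aEFX a v n A"
    using i(1) j(1) fin[OF j(1)] xy sub[OF j(1)] nonneg a
    by (intro not_is_aEFX_if_less_member[of i n j A x y v a]) auto
  then show ?thesis using v by blast
qed

lemma prefix_prediction_not_aEFX:
  fixes n :: nat and a D :: real
  defines "p \<equiv> \<lambda>t. if t < n then 1 / n else 0"
  assumes n: "2 \<le> n" and a: "0 < a" and D: "1 - 1 / n \<le> D" "D \<le> 1"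
    and alloc: "is_alloc n (n + 1) A" and EFX: "is_aEFX 1 p n A"
  shows "\<exists>v. normalized (n + 1) v \<and> pred_error (n + 1) v (n + 1) p = D \<and> \<not> is_aEFX a v n A"
proof -
  have sub: "A i \<subseteq> {..<n + 1}" if "i < n" for i using alloc that by (simp add: is_alloc_def)
  have disj: "A i \<inter> A j = {}" if "i < n" "j < n" "i \<noteq> j" for i j
    using alloc that by (simp add: is_alloc_def)
  have "n \<in> (\<Union>i<n. A i)" using alloc by (simp add: is_alloc_def)
  then obtain j where j: "j < n" "n \<in> A j" by blast
  have "{t. t < n + 1 \<and> 0 < p t} = {..<n}" using n by (auto simp: p_def)
  then have "\<exists>h\<in>A j. 0 < p h"
    using is_aEFX_1_imp_positive_good[OF alloc EFX _ _ j(1)] by (simp add: p_def)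
  then obtain h where h: "h \<in> A j" "h < n" by (auto simp: p_def split: if_splits)
  define i where "i = (if j = 0 then 1 else 0 :: nat)"
  have i: "i < n" "i \<noteq> j" using n by (auto simp: i_def)
  have D_pos: "0 < D"
  proof -
    have "1 / real n \<le> 1 / 2" using n by (simp add: divide_le_eq)
    then show ?thesis using D(1) by linarith
  qed
  define v where "v t = (if t = h then 1 - D else if t = n then D else 0)" for t
  have nonneg: "0 \<le> v t" for t using D(2) D_pos unfolding v_def by simp
  have "(\<Sum>t<n + 1. v t) = (1 - D) + D + (real (n + 1) - 2) * 0"
    unfolding v_def using h sum_if_two_points[of "{..<n + 1}" h n] by simp
  then have "normalized (n + 1) v" using nonneg by (simp add: normalized_def)
  moreover have "pred_error (n + 1) v (n + 1) p = D"
  proof -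
    have "\<bar>1 / real n - (1 - D)\<bar> = D - 1 + 1 / n" using D(1) by simp
    then have "(\<Sum>t<max (n + 1) (n + 1). \<bar>(if t < n + 1 then p t else 0)
                                        - (if t < n + 1 then v t else 0)\<bar>)
        = (\<Sum>t<n + 1. if t = h then D - 1 + 1 / n else if t = n then D else 1 / n)"
      using D_pos h by (intro sum.cong) (auto simp: v_def p_def)
    also have "\<dots> = (D - 1 + 1 / n) + D + (real (n + 1) - 2) * (1 / n)"
      using h sum_if_two_points[of "{..<n + 1}" h n] by simp
    also have "(real (n + 1) - 2) * (1 / n) = 1 - 1 / n" using n by (simp add: field_simps)
    finally show ?thesis by (simp add: pred_error_def)
  qed
  moreover have "\<not> is_aEFX a v n A"
  proof -
    have "v t = 0" if "t \<in> A i" for t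
      using that disj[OF i(1) j(1) i(2)] h j unfolding v_def by auto
    then have "sum v (A i) < a * v n" using a D_pos h by (simp add: v_def)
    then show ?thesis
      using i(1) j h sub[OF j(1)] finite_subset[OF sub[OF j(1)]] nonneg a
      by (intro not_is_aEFX_if_less_member[of i n j A n h v a]) auto
  qed
  ultimately show ?thesis by blast
qed

theorem proposition4p3:
  fixes n :: nat and a D :: real
    and ALG :: "nat \<Rightarrow> (nat \<Rightarrow> real) \<Rightarrow> nat \<Rightarrow> nat set"
  assumes "n \<ge> 2"
    and "0 < a" and "a \<le> 1"
    and "(1 - a) / ((2 * real n - 1) * (1 + a)) < D" and "D \<le> 1"
    and ALG_EFX: "\<forall>T' p. normalized T' p \<longrightarrow>
                    is_alloc n T' (ALG T' p) \<and> is_aEFX 1 p n (ALG T' p)"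
  shows "\<exists>T v p. T > 0 \<and> normalized T v \<and> normalized T p
           \<and> pred_error T v T p = D
           \<and> \<not> is_aEFX a v n (ALG T p)"
proof (cases "D \<le> 1 - 1 / (2 * real n - 1)")
  case True
  define T where "T = 2 * n - 1"
  have T: "n < T" "T < 2 * n" "real T = 2 * real n - 1"
    using assms(1) by (auto simp: T_def)
  have "0 \<le> (1 - a) / ((2 * real n - 1) * (1 + a))" using assms(1-3) by simp
  then have "0 \<le> D" using assms(4) by linarith
  define p where "p t = (if t < T then 1 / real T else 0)" for t
  have p: "normalized T p" unfolding p_def using T by (intro normalized_uniform_prefix) auto
  then have "is_alloc n T (ALG T p)" using ALG_EFX by blast
  with T \<open>0 \<le> D\<close> True assms(2,4) obtain v where
    "normalized T v" "pred_error T v T p = D" "\<not> is_aEFX a v n (ALG T p)"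
    using uniform_prediction_not_aEFX[of n T "ALG T p" a D] unfolding p_def by auto
  then show ?thesis using p T(1) by (intro exI[of _ T] exI[of _ v] exI[of _ p]) auto
next
  case False
  have "1 / (2 * real n - 1) \<le> 1 / real n" using assms(1) by (intro divide_left_mono) auto
  then have "1 - 1 / real n \<le> D" using False by linarith
  define p where "p t = (if t < n then 1 / real n else 0)" for t
  have p: "normalized (n + 1) p"
    unfolding p_def using assms(1) by (intro normalized_uniform_prefix) auto
  then have "is_alloc n (n + 1) (ALG (n + 1) p)" "is_aEFX 1 p n (ALG (n + 1) p)"
    using ALG_EFX by blast+
  with \<open>1 - 1 / real n \<le> D\<close> obtain v where
    "normalized (n + 1) v" "pred_error (n + 1) v (n + 1) p = D"
    and "\<not> is_aEFX a v n (ALG (n + 1) p)"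
    using prefix_prediction_not_aEFX[of n a D] assms(1,2,5) unfolding p_def by blast
  then show ?thesis using p by (intro exI[of _ "n + 1"] exI[of _ v] exI[of _ p]) auto
qed

end
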